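(* Let $X,Y\subset\mathbb{R}^d$ be bounded open sets with $X$ connected, and let $c:X\times Y\to\mathbb{R}$ be bounded from below and admit a modulus of continuity. Let $a\in\mathbb{R}$ and let $\psi$ be a subharmonic function on $X$ with values in $[a,\infty)$. Then $$Q_{\bar c}(\psi)=Q_{\bar c}\big(Q_{ce}(Q_{\bar c}(\psi))\big)\quad\text{and}\quad Q_{ce}(\psi)=Q_{ce}\big(Q_{\bar c}(Q_{ce}(\psi))\big).$$
   Context: For $g$ on $Y$: $Q_c(g)(x)=\inf_{y\in Y}\{g(y)+c(x,y)\}$ for $x\in X$; for $g$ on $X$: $Q_{\bar c}(g)(y)=\sup_{x\in X}\{g(x)-c(x,y)\}$ for $y\in Y$ (extended-real valued). For a function $g$ on $X$, its subharmonic envelope is $g_e=\sup\{\phi:\phi\text{ subharmonic on }X,\ \phi\le g\}$, and $Q_{ce}(g):=(Q_c(g))_e$. A function is subharmonic on $X$ if it is upper semicontinuous with values in $[-\infty,\infty)$ and satisfies the sub-mean-value inequality on every sphere whose ball lies in $X$. *)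

theory Defs
  imports "HOL-Analysis.Analysis"
begin

definition has_modulus_of_continuity ::
  "'a::euclidean_space set \<Rightarrow> 'a set \<Rightarrow> ('a \<Rightarrow> 'a \<Rightarrow> real) \<Rightarrow> bool" where
  "has_modulus_of_continuity X Y c \<longleftrightarrow>
     (\<exists>\<omega>::real \<Rightarrow> real. (\<omega> \<longlongrightarrow> 0) (at_right 0) \<and>
        (\<forall>x\<in>X. \<forall>x'\<in>X. \<forall>y\<in>Y. \<forall>y'\<in>Y.
           \<bar>c x y - c x' y'\<bar> \<le> \<omega> (dist x x' + dist y y')))"

definition Qc :: "'a set \<Rightarrow> ('a \<Rightarrow> 'a \<Rightarrow> real) \<Rightarrow> ('a \<Rightarrow> ereal) \<Rightarrow> 'a \<Rightarrow> ereal" where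
  "Qc Y c g x = (INF y\<in>Y. g y + ereal (c x y))"

definition Qcbar :: "'a set \<Rightarrow> ('a \<Rightarrow> 'a \<Rightarrow> real) \<Rightarrow> ('a \<Rightarrow> ereal) \<Rightarrow> 'a \<Rightarrow> ereal" where
  "Qcbar X c g y = (SUP x\<in>X. g x - ereal (c x y))"

definition usc_on :: "'a::topological_space set \<Rightarrow> ('a \<Rightarrow> ereal) \<Rightarrow> bool" where
  "usc_on X f \<longleftrightarrow> (\<forall>x\<in>X. \<forall>t. f x < t \<longrightarrow> eventually (\<lambda>y. f y < t) (at x within X))"

text \<open>Integral of f over the sphere of centre x and radius r with respect to the surface
  measure normalised to total mass vol(unit ball), i.e. the push-forward of Lebesgue measure
  on the unit ball under radial projection (this is the normalised surface measure).\<close>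
definition sphere_integral :: "('a::euclidean_space \<Rightarrow> ereal) \<Rightarrow> 'a \<Rightarrow> real \<Rightarrow> ereal" where
  "sphere_integral f x r =
     enn2ereal (\<integral>\<^sup>+ z. indicator (ball 0 1) z * e2ennreal (f (x + r *\<^sub>R (z /\<^sub>R norm z))) \<partial>lborel)
   - enn2ereal (\<integral>\<^sup>+ z. indicator (ball 0 1) z * e2ennreal (- f (x + r *\<^sub>R (z /\<^sub>R norm z))) \<partial>lborel)"

definition sphere_mean :: "('a::euclidean_space \<Rightarrow> ereal) \<Rightarrow> 'a \<Rightarrow> real \<Rightarrow> ereal" where
  "sphere_mean f x r = sphere_integral f x r / ereal (measure lborel (ball (0::'a) 1))"

definition subharmonic_on :: "'a::euclidean_space set \<Rightarrow> ('a \<Rightarrow> ereal) \<Rightarrow> bool" where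
  "subharmonic_on X \<phi> \<longleftrightarrow> usc_on X \<phi> \<and> (\<forall>x\<in>X. \<phi> x \<noteq> \<infinity>) \<and>
     (\<forall>x r. 0 < r \<and> cball x r \<subseteq> X \<longrightarrow> \<phi> x \<le> sphere_mean \<phi> x r)"

definition subharmonic_envelope :: "'a::euclidean_space set \<Rightarrow> ('a \<Rightarrow> ereal) \<Rightarrow> 'a \<Rightarrow> ereal" where
  "subharmonic_envelope X g x =
     (SUP \<phi>\<in>{\<phi>. subharmonic_on X \<phi> \<and> (\<forall>z\<in>X. \<phi> z \<le> g z)}. \<phi> x)"

definition Qce :: "'a::euclidean_space set \<Rightarrow> 'a set \<Rightarrow> ('a \<Rightarrow> 'a \<Rightarrow> real) \<Rightarrow> ('a \<Rightarrow> ereal) \<Rightarrow> 'a \<Rightarrow> ereal" where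
  "Qce X Y c g = subharmonic_envelope X (Qc Y c g)"

end

theory Submission
  imports Defs
begin

text \<open>For fixed cost, \<open>Qc\<close> and \<open>Qcbar\<close> are monotone and satisfy \<open>h \<le> Qc (Qcbar h)\<close> on \<open>X\<close> and
  \<open>Qcbar (Qc g) \<le> g\<close> on \<open>Y\<close>, i.e. they form a Galois connection, while the subharmonic envelope
  lies below its argument and depends on it only through its subharmonic minorants. The two identities are then
  the triangle identities of this situation, obtained by squeezing each side between two monotone
  bounds.\<close>

lemma le_Qc_Qcbar:
  assumes "x \<in> X"
  shows "h x \<le> Qc Y c (Qcbar X c h) x"
  unfolding Qc_def
proof (rule INF_greatest)
  fix y assume "y \<in> Y"
  have "h x - ereal (c x y) \<le> Qcbar X c h y"
    unfolding Qcbar_def using assms by (rule SUP_upper)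
  then have "h x - ereal (c x y) + ereal (c x y) \<le> Qcbar X c h y + ereal (c x y)"
    by (rule add_right_mono)
  moreover have "h x - ereal (c x y) + ereal (c x y) = h x"
    by (cases "h x") auto
  ultimately show "h x \<le> Qcbar X c h y + ereal (c x y)" by simp
qed

lemma Qcbar_Qc_le:
  assumes "y \<in> Y"
  shows "Qcbar X c (Qc Y c g) y \<le> g y"
  unfolding Qcbar_def
proof (rule SUP_least)
  fix x assume "x \<in> X"
  have "Qc Y c g x \<le> g y + ereal (c x y)"
    unfolding Qc_def using assms by (rule INF_lower)
  then have "Qc Y c g x - ereal (c x y) \<le> g y + ereal (c x y) - ereal (c x y)"
    by (simp add: ereal_minus_mono)
  moreover have "g y + ereal (c x y) - ereal (c x y) = g y"
    by (cases "g y") auto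
  ultimately show "Qc Y c g x - ereal (c x y) \<le> g y" by simp
qed

lemma Qcbar_mono:
  assumes "\<And>x. x \<in> X \<Longrightarrow> h x \<le> h' x"
  shows "Qcbar X c h y \<le> Qcbar X c h' y"
  unfolding Qcbar_def
  by (rule SUP_mono) (use assms in \<open>auto intro!: bexI ereal_minus_mono\<close>)

lemma Qc_mono:
  assumes "\<And>y. y \<in> Y \<Longrightarrow> g y \<le> g' y"
  shows "Qc Y c g x \<le> Qc Y c g' x"
  unfolding Qc_def
  by (rule INF_mono) (use assms in \<open>auto intro!: bexI add_right_mono\<close>)

lemma subharmonic_envelope_le:
  assumes "x \<in> X"
  shows "subharmonic_envelope X g x \<le> g x"
  unfolding subharmonic_envelope_def
  by (rule SUP_least) (use assms in auto)

lemma subharmonic_envelope_upper: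
  assumes "subharmonic_on X \<phi>" "\<And>z. z \<in> X \<Longrightarrow> \<phi> z \<le> g z"
  shows "\<phi> x \<le> subharmonic_envelope X g x"
  unfolding subharmonic_envelope_def
  by (rule SUP_upper) (use assms in auto)

lemma subharmonic_envelope_cong_minorants:
  assumes "\<And>\<phi>. subharmonic_on X \<phi> \<Longrightarrow>
             (\<forall>z\<in>X. \<phi> z \<le> g z) \<longleftrightarrow> (\<forall>z\<in>X. \<phi> z \<le> g' z)"
  shows "subharmonic_envelope X g x = subharmonic_envelope X g' x"
proof -
  have "{\<phi>. subharmonic_on X \<phi> \<and> (\<forall>z\<in>X. \<phi> z \<le> g z)} =
        {\<phi>. subharmonic_on X \<phi> \<and> (\<forall>z\<in>X. \<phi> z \<le> g' z)}"
    using assms by blast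
  then show ?thesis unfolding subharmonic_envelope_def by simp
qed

lemma Qce_le_Qc:
  assumes "x \<in> X"
  shows "Qce X Y c g x \<le> Qc Y c g x"
  unfolding Qce_def using assms by (rule subharmonic_envelope_le)

lemma le_Qce_Qcbar:
  assumes "subharmonic_on X \<psi>"
  shows "\<psi> x \<le> Qce X Y c (Qcbar X c \<psi>) x"
  unfolding Qce_def using assms by (rule subharmonic_envelope_upper) (rule le_Qc_Qcbar)

lemma Qcbar_Qce_Qcbar:
  assumes "subharmonic_on X \<psi>" "y \<in> Y"
  shows "Qcbar X c \<psi> y = Qcbar X c (Qce X Y c (Qcbar X c \<psi>)) y"
proof (rule antisym)
  show "Qcbar X c \<psi> y \<le> Qcbar X c (Qce X Y c (Qcbar X c \<psi>)) y"
    using assms(1) by (intro Qcbar_mono le_Qce_Qcbar)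
  have "Qcbar X c (Qce X Y c (Qcbar X c \<psi>)) y \<le> Qcbar X c (Qc Y c (Qcbar X c \<psi>)) y"
    by (intro Qcbar_mono Qce_le_Qc)
  also have "\<dots> \<le> Qcbar X c \<psi> y"
    using assms(2) by (rule Qcbar_Qc_le)
  finally show "Qcbar X c (Qce X Y c (Qcbar X c \<psi>)) y \<le> Qcbar X c \<psi> y" .
qed

lemma Qce_Qcbar_Qce:
  "Qce X Y c \<psi> x = Qce X Y c (Qcbar X c (Qce X Y c \<psi>)) x"
proof -
  have "subharmonic_envelope X (Qc Y c \<psi>) x =
        subharmonic_envelope X (Qc Y c (Qcbar X c (Qce X Y c \<psi>))) x"
  proof (rule subharmonic_envelope_cong_minorants, intro iffI ballI)
    fix \<phi> z assume sh: "subharmonic_on X \<phi>"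
      and minorant: "\<forall>z\<in>X. \<phi> z \<le> Qc Y c \<psi> z" and z: "z \<in> X"
    have "\<phi> z \<le> Qc Y c (Qcbar X c \<phi>) z"
      using z by (rule le_Qc_Qcbar)
    also have "\<dots> \<le> Qc Y c (Qcbar X c (Qce X Y c \<psi>)) z"
      unfolding Qce_def using sh minorant
      by (intro Qc_mono Qcbar_mono subharmonic_envelope_upper) auto
    finally show "\<phi> z \<le> Qc Y c (Qcbar X c (Qce X Y c \<psi>)) z" .
  next
    fix \<phi> z assume minorant: "\<forall>z\<in>X. \<phi> z \<le> Qc Y c (Qcbar X c (Qce X Y c \<psi>)) z"
      and z: "z \<in> X"
    have "Qc Y c (Qcbar X c (Qce X Y c \<psi>)) z \<le> Qc Y c (Qcbar X c (Qc Y c \<psi>)) z"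
      by (intro Qc_mono Qcbar_mono Qce_le_Qc)
    also have "\<dots> \<le> Qc Y c \<psi> z"
      by (intro Qc_mono Qcbar_Qc_le)
    finally show "\<phi> z \<le> Qc Y c \<psi> z"
      using minorant z by (meson order_trans)
  qed
  then show ?thesis
    by (simp only: Qce_def[of X Y c \<psi>, symmetric] Qce_def[of X Y c "Qcbar X c (Qce X Y c \<psi>)"])
qed

theorem mainTheorem17:
  fixes X Y :: "'a::euclidean_space set" and c :: "'a \<Rightarrow> 'a \<Rightarrow> real"
    and \<psi> :: "'a \<Rightarrow> ereal" and a :: real
  assumes "open X" "bounded X" "connected X" "open Y" "bounded Y"
    and "\<exists>m. \<forall>x\<in>X. \<forall>y\<in>Y. m \<le> c x y"
    and "has_modulus_of_continuity X Y c"
    and "subharmonic_on X \<psi>"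
    and "\<forall>x\<in>X. ereal a \<le> \<psi> x"
  shows "(\<forall>y\<in>Y. Qcbar X c \<psi> y = Qcbar X c (Qce X Y c (Qcbar X c \<psi>)) y) \<and>
         (\<forall>x\<in>X. Qce X Y c \<psi> x = Qce X Y c (Qcbar X c (Qce X Y c \<psi>)) x)"
  using Qcbar_Qce_Qcbar[OF assms(8)] Qce_Qcbar_Qce by blast

end
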